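(* Let $e_1,\dots,e_n$ be positive real numbers and let $J_n=\{(x_1,\dots,x_n)\in\mathbb{R}^n: 0\le x_1\le\cdots\le x_n\le1\}$. Then $$\int_{J_n}\det\bigl[x_j^{e_i-1}\bigr]_{1\le i,j\le n}\,dx_1\cdots dx_n=\frac1{e_1\cdots e_n}\prod_{1\le i<j\le n}\frac{e_j-e_i}{e_j+e_i}.$$ *)

theory Defs
  imports "HOL-Analysis.Analysis" "Jordan_Normal_Form.Determinant"
begin

definition J :: "nat \<Rightarrow> (nat \<Rightarrow> real) set" where
  "J n = {x \<in> PiE {..<n} (\<lambda>_. UNIV).
            (\<forall>i<n. 0 \<le> x i \<and> x i \<le> 1) \<and> (\<forall>i j. i \<le> j \<and> j < n \<longrightarrow> x i \<le> x j)}"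

end

theory Submission
  imports Defs "HOL-Computational_Algebra.Polynomial"
begin

text \<open>Write I_n(t) for the integral of det[x_j^(e_i - 1)] over the ordered simplex
  0 <= x_0 <= ... <= x_(n-1) <= t. Expanding the determinant along the column of the largest
  coordinate y = x_(n-1) and integrating out the other coordinates first, the k-th cofactor
  contributes y^(e_k - 1) I_(n-1)(y) for the exponents without e_k. Hence inductively
  I_n(t) = t^S V_n(e), where S is the sum of the exponents and V_n(e) the right-hand side,
  provided sum_k (-1)^(k+n) V_(n-1)(e without e_k) = S V_n(e). After cancelling the common
  factors this is the partial fraction identity
  sum_k e_k prod_(j<>k) (e_k + e_j)/(e_k - e_j) = sum_k e_k,
  obtained by Lagrange interpolation of prod_j (x + e_j) - prod_j (x - e_j) at the nodes e_k.
  If two exponents coincide, both sides of the theorem vanish.\<close>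

lemma degree_prod_linear:
  fixes c :: "'b \<Rightarrow> 'a::idom"
  assumes "finite A"
  shows "degree (\<Prod>j\<in>A. [:c j, 1:]) = card A"
  using assms by (simp add: degree_prod_eq_sum_degree)

lemma coeff_prod_linear_card:
  fixes c :: "'b \<Rightarrow> 'a::idom"
  assumes "finite A"
  shows "coeff (\<Prod>j\<in>A. [:c j, 1:]) (card A) = 1"
  using lead_coeff_prod[of "\<lambda>j. [:c j, 1:]" A] degree_prod_linear[OF assms, of c] by simp

lemma coeff_prod_linear_card_minus_1:
  fixes c :: "'b \<Rightarrow> 'a::idom"
  assumes "finite A" "A \<noteq> {}"
  shows "coeff (\<Prod>j\<in>A. [:c j, 1:]) (card A - 1) = (\<Sum>j\<in>A. c j)"
  using assms
proof (induction rule: finite_ne_induct)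
  case (singleton a)
  then show ?case by simp
next
  case (insert a A)
  define Q where "Q = (\<Prod>j\<in>A. [:c j, 1:])"
  have "(\<Prod>j\<in>insert a A. [:c j, 1:]) = Polynomial.smult (c a) Q + pCons 0 Q"
    using insert by (simp add: Q_def)
  moreover have "coeff (pCons 0 Q) (card A) = coeff Q (card A - 1)"
    using insert by (cases "card A") auto
  ultimately show ?case
    using insert coeff_prod_linear_card[OF insert(1), of c] by (simp add: Q_def)
qed

lemma coeff_eq_sum_lagrange:
  fixes p :: "'a::field poly" and x :: "nat \<Rightarrow> 'a"
  assumes inj: "inj_on x {..<m}" and deg: "degree p < m"
  shows "coeff p (m - 1) = (\<Sum>k<m. poly p (x k) / (\<Prod>j\<in>{..<m}-{k}. x k - x j))"
proof -
  define L where "L k = (\<Prod>j\<in>{..<m}-{k}. [:- x j, 1:])" for k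
  define c where "c k = poly p (x k) / (\<Prod>j\<in>{..<m}-{k}. x k - x j)" for k
  define q where "q = (\<Sum>k<m. Polynomial.smult (c k) (L k))"
  have card_L: "card ({..<m}-{k}) = m - 1" if "k < m" for k
    using that by simp
  have degree_L: "degree (L k) = m - 1" and coeff_L: "coeff (L k) (m - 1) = 1" if "k < m" for k
    using degree_prod_linear[of "{..<m}-{k}" "\<lambda>j. - x j"]
      coeff_prod_linear_card[of "{..<m}-{k}" "\<lambda>j. - x j"] card_L[OF that]
    by (simp_all add: L_def)
  have "degree q \<le> m - 1"
    unfolding q_def
    by (intro degree_sum_le) (auto intro: order.trans[OF degree_smult_le] simp: degree_L)
  have poly_L: "poly (L k) (x i) = (if i = k then (\<Prod>j\<in>{..<m}-{k}. x k - x j) else 0)"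
    if "i < m" "k < m" for i k
    using that by (auto simp: L_def poly_prod)
  have "poly q (x i) = poly p (x i)" if "i < m" for i
  proof -
    have "(\<Prod>j\<in>{..<m}-{i}. x i - x j) \<noteq> 0"
      using inj that by (auto simp: inj_on_def)
    moreover have "poly q (x i) = c i * poly (L i) (x i)"
      using that by (simp add: q_def poly_sum poly_L if_distrib cong: if_cong)
    ultimately show ?thesis
      using that by (simp add: c_def poly_L)
  qed
  moreover have "card (x ` {..<m}) = m"
    using inj by (simp add: card_image)
  ultimately have "p = q"
    using deg \<open>degree q \<le> m - 1\<close> by (intro poly_eqI_degree[of "x ` {..<m}"]) auto
  then have "coeff p (m - 1) = (\<Sum>k<m. c k * coeff (L k) (m - 1))"
    by (simp add: q_def coeff_sum)
  also have "\<dots> = (\<Sum>k<m. c k)"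
    using coeff_L by (intro sum.cong) auto
  finally show ?thesis
    by (simp add: c_def)
qed

lemma sum_mult_prod_add_divide_diff:
  fixes e :: "nat \<Rightarrow> 'a::field_char_0"
  assumes inj: "inj_on e {..<m}"
  shows "(\<Sum>k<m. e k * (\<Prod>j\<in>{..<m}-{k}. (e k + e j) / (e k - e j))) = (\<Sum>k<m. e k)"
proof (cases "m = 0")
  case False
  define p where "p = (\<Prod>j<m. [:e j, 1:]) - (\<Prod>j<m. [:- e j, 1:])"
  have "degree p \<le> m"
    unfolding p_def using degree_diff_le_max[of "\<Prod>j<m. [:e j, 1:]" "\<Prod>j<m. [:- e j, 1:]"]
    by (simp add: degree_prod_linear)
  moreover have "coeff p m = 0"
    using coeff_prod_linear_card[of "{..<m}" e] coeff_prod_linear_card[of "{..<m}" "\<lambda>j. - e j"]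
    by (simp add: p_def)
  ultimately have "degree p < m"
    using False le_neq_implies_less leading_coeff_0_iff by fastforce
  have poly_p: "poly p (e k) = 2 * (e k * (\<Prod>j\<in>{..<m}-{k}. e k + e j))" if "k < m" for k
  proof -
    have "poly p (e k) = (\<Prod>j<m. e k + e j) - (\<Prod>j<m. e k - e j)"
      by (simp add: p_def poly_prod add.commute)
    moreover have "(\<Prod>j<m. e k - e j) = 0"
      using that by (intro prod_zero) auto
    moreover have "(\<Prod>j<m. e k + e j) = (e k + e k) * (\<Prod>j\<in>{..<m}-{k}. e k + e j)"
      using that by (subst prod.remove[of _ k]) auto
    ultimately show ?thesis
      by simp
  qed
  have "2 * (\<Sum>k<m. e k) = coeff p (m - 1)"
    using coeff_prod_linear_card_minus_1[of "{..<m}" e] False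
      coeff_prod_linear_card_minus_1[of "{..<m}" "\<lambda>j. - e j"]
    by (simp add: p_def sum_negf lessThan_empty_iff)
  also have "\<dots> = (\<Sum>k<m. poly p (e k) / (\<Prod>j\<in>{..<m}-{k}. e k - e j))"
    by (rule coeff_eq_sum_lagrange[OF inj \<open>degree p < m\<close>])
  also have "\<dots> = 2 * (\<Sum>k<m. e k * (\<Prod>j\<in>{..<m}-{k}. (e k + e j) / (e k - e j)))"
    by (simp add: sum_distrib_left poly_p prod_dividef)
  finally show ?thesis
    by simp
qed simp

definition skip :: "nat \<Rightarrow> nat \<Rightarrow> nat" where
  "skip k i = (if i < k then i else Suc i)"

lemma bij_betw_skip: "k < Suc n \<Longrightarrow> bij_betw (skip k) {..<n} ({..<Suc n} - {k})"
  by (rule bij_betw_byWitness[where f' = "\<lambda>i. if i < k then i else i - 1"]) (auto simp: skip_def)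

lemma skip_less_Suc: "i < n \<Longrightarrow> skip k i < Suc n"
  by (simp add: skip_def)

lemma sum_skip:
  fixes g :: "nat \<Rightarrow> 'a::ab_group_add"
  assumes "k < Suc n"
  shows "(\<Sum>i<n. g (skip k i)) = (\<Sum>i<Suc n. g i) - g k"
  using sum.reindex_bij_betw[OF bij_betw_skip[OF assms], of g] assms
  by (simp add: sum_diff1)

lemma inj_on_comp_skip:
  assumes "inj_on e {..<Suc n}" "k < Suc n"
  shows "inj_on (e \<circ> skip k) {..<n}"
  using bij_betw_skip[OF assms(2)] assms(1)
  by (intro comp_inj_on) (auto simp: bij_betw_def intro: inj_on_subset)

lemma prod_pairs_remove:
  fixes f :: "nat \<Rightarrow> nat \<Rightarrow> 'a::comm_monoid_mult"
  assumes k: "k < Suc n"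
  shows "(\<Prod>(i, j)\<in>{(i, j). i < j \<and> j < Suc n}. f i j) =
         (\<Prod>(i, j)\<in>{(i, j). i < j \<and> j < n}. f (skip k i) (skip k j)) *
         (\<Prod>j\<in>{..<Suc n} - {k}. if j < k then f j k else f k j)"
proof -
  define S where "S = {(i, j). i < j \<and> j < Suc n}"
  define T where "T = {(i, j). i < j \<and> j < Suc n \<and> i \<noteq> k \<and> j \<noteq> k}"
  have "finite S"
    by (rule finite_subset[of _ "{..<Suc n} \<times> {..<Suc n}"]) (auto simp: S_def)
  then have "prod (case_prod f) S = prod (case_prod f) T * prod (case_prod f) (S - T)"
    using prod.subset_diff[of T S "case_prod f"] by (auto simp: S_def T_def mult.commute)
  moreover have "prod (case_prod f) T =
      (\<Prod>(i, j)\<in>{(i, j). i < j \<and> j < n}. f (skip k i) (skip k j))"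
    by (rule prod.reindex_bij_witness[where i = "map_prod (skip k) (skip k)"
          and j = "map_prod (\<lambda>i. if i < k then i else i - 1) (\<lambda>i. if i < k then i else i - 1)"])
       (use k in \<open>auto simp: skip_def T_def split: if_splits\<close>)
  moreover have "prod (case_prod f) (S - T) = (\<Prod>j\<in>{..<Suc n} - {k}. if j < k then f j k else f k j)"
    by (rule prod.reindex_bij_witness[where i = "\<lambda>j. if j < k then (j, k) else (k, j)"
          and j = "\<lambda>(i, j). if i = k then j else i"])
       (use k in \<open>auto simp: S_def T_def split: if_splits\<close>)
  ultimately show ?thesis
    by (simp add: S_def)
qed

lemma prod_if_less_1_minus_1:
  assumes "k < Suc n"
  shows "(\<Prod>j\<in>{..<Suc n} - {k}. if j < k then 1 else -1 :: 'a::comm_ring_1) = (-1) ^ (k + n)"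
proof -
  have "({..<Suc n} - {k}) \<inter> - {j. j < k} = {k<..n}"
    using assms by auto
  then have "(\<Prod>j\<in>{..<Suc n} - {k}. if j < k then 1 else -1 :: 'a) = (-1) ^ (n - k)"
    by (subst prod.If_cases) simp_all
  also have "k + n = (n - k) + 2 * k"
    using assms by simp
  then have "(-1 :: 'a) ^ (n - k) = (-1) ^ (k + n)"
    by (simp only: power_add power_mult) simp
  finally show ?thesis .
qed

definition det_integral_value :: "nat \<Rightarrow> (nat \<Rightarrow> real) \<Rightarrow> real" where
  "det_integral_value n e =
     (1 / (\<Prod>i<n. e i)) * (\<Prod>(i, j)\<in>{(i, j). i < j \<and> j < n}. (e j - e i) / (e j + e i))"

lemma det_integral_value_remove:
  fixes e :: "nat \<Rightarrow> real"
  assumes pos: "\<And>i. i < Suc n \<Longrightarrow> e i > 0" and inj: "inj_on e {..<Suc n}" and k: "k < Suc n"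
  shows "(-1) ^ (k + n) * det_integral_value n (e \<circ> skip k) =
         det_integral_value (Suc n) e * (e k * (\<Prod>j\<in>{..<Suc n} - {k}. (e k + e j) / (e k - e j)))"
proof -
  define K where "K = {..<Suc n} - {k}"
  define P where "P = (\<Prod>(i, j)\<in>{(i, j). i < j \<and> j < n}.
    (e (skip k j) - e (skip k i)) / (e (skip k j) + e (skip k i)))"
  define \<rho> where "\<rho> j = (e k - e j) / (e k + e j)" for j
  have "finite K"
    by (simp add: K_def)
  have sign: "(\<Prod>j\<in>K. if j < k then 1 else -1 :: real) = (-1) ^ (k + n)"
    unfolding K_def by (rule prod_if_less_1_minus_1[OF k])
  have "(\<Prod>j\<in>K. if j < k then (e k - e j) / (e k + e j) else (e j - e k) / (e j + e k)) =
        (\<Prod>j\<in>K. (if j < k then 1 else -1) * \<rho> j)"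
    by (intro prod.cong) (simp_all add: \<rho>_def add.commute minus_divide_left)
  also have "\<dots> = (-1) ^ (k + n) * prod \<rho> K"
    by (simp add: prod.distrib sign)
  finally have pairs_with_k:
    "(\<Prod>j\<in>K. if j < k then (e k - e j) / (e k + e j) else (e j - e k) / (e j + e k)) =
     (-1) ^ (k + n) * prod \<rho> K" .
  have "(\<Prod>i<Suc n. e i) = e k * prod e K"
    unfolding K_def using k by (subst prod.remove[of _ k]) auto
  then have value_Suc:
      "det_integral_value (Suc n) e = 1 / (e k * prod e K) * (P * ((-1) ^ (k + n) * prod \<rho> K))"
    unfolding det_integral_value_def prod_pairs_remove[OF k] K_def[symmetric] pairs_with_k P_def
    by simp
  have value_n: "det_integral_value n (e \<circ> skip k) = 1 / prod e K * P"
    using prod.reindex_bij_betw[OF bij_betw_skip[OF k], of e]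
    by (simp add: det_integral_value_def K_def P_def case_prod_beta)
  have inverse_\<rho>: "(\<Prod>j\<in>K. (e k + e j) / (e k - e j)) = 1 / prod \<rho> K"
    by (simp add: \<rho>_def prod_dividef)
  have "e k \<noteq> 0" "prod e K \<noteq> 0"
    using pos k by (fastforce simp: K_def)+
  moreover have "prod \<rho> K \<noteq> 0"
  proof -
    have "e k - e j \<noteq> 0 \<and> e k + e j \<noteq> 0" if "j \<in> K" for j
    proof -
      have "e k > 0" "e j > 0" "e k \<noteq> e j"
        using that pos inj k by (auto simp: K_def inj_on_def)
      then show ?thesis
        by simp
    qed
    then show ?thesis
      by (simp add: \<rho>_def \<open>finite K\<close>)
  qed
  ultimately show ?thesis
    unfolding K_def[symmetric] value_Suc value_n inverse_\<rho> by (simp add: field_simps)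
qed

lemma det_integral_value_Suc:
  fixes e :: "nat \<Rightarrow> real"
  assumes "\<And>i. i < Suc n \<Longrightarrow> e i > 0" and "inj_on e {..<Suc n}"
  shows "(\<Sum>k<Suc n. (-1) ^ (k + n) * det_integral_value n (e \<circ> skip k)) =
         (\<Sum>i<Suc n. e i) * det_integral_value (Suc n) e"
proof -
  have "(\<Sum>k<Suc n. (-1) ^ (k + n) * det_integral_value n (e \<circ> skip k)) =
        (\<Sum>k<Suc n. det_integral_value (Suc n) e *
          (e k * (\<Prod>j\<in>{..<Suc n} - {k}. (e k + e j) / (e k - e j))))"
    using assms by (intro sum.cong) (simp_all add: det_integral_value_remove)
  also have "\<dots> = det_integral_value (Suc n) e *
      (\<Sum>k<Suc n. e k * (\<Prod>j\<in>{..<Suc n} - {k}. (e k + e j) / (e k - e j)))"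
    by (rule sum_distrib_left[symmetric])
  also have "\<dots> = det_integral_value (Suc n) e * (\<Sum>i<Suc n. e i)"
    using assms(2) by (simp only: sum_mult_prod_add_divide_diff)
  finally show ?thesis
    by simp
qed

definition gen_vandermonde :: "nat \<Rightarrow> (nat \<Rightarrow> real) \<Rightarrow> (nat \<Rightarrow> real) \<Rightarrow> real" where
  "gen_vandermonde n e x = Determinant.det (Matrix.mat n n (\<lambda>(i, j). x j powr (e i - 1)))"

lemma gen_vandermonde_eq_sum_permutations:
  "gen_vandermonde n e x = (\<Sum>p | p permutes {..<n}. signof p * (\<Prod>j<n. x j powr (e (p j) - 1)))"
  unfolding gen_vandermonde_def
  by (subst det_col[of _ n])
     (auto simp: atLeast0LessThan permutes_in_image intro!: sum.cong prod.cong)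

lemma det_laplace_last_column:
  fixes f :: "nat \<Rightarrow> nat \<Rightarrow> 'a::comm_ring_1"
  shows "Determinant.det (Matrix.mat (Suc n) (Suc n) (\<lambda>(i, j). f i j)) =
         (\<Sum>k<Suc n. (-1) ^ (k + n) * f k n *
            Determinant.det (Matrix.mat n n (\<lambda>(i, j). f (skip k i) j)))"
proof -
  let ?A = "Matrix.mat (Suc n) (Suc n) (\<lambda>(i, j). f i j)"
  have "Determinant.det ?A = (\<Sum>k<Suc n. ?A $$ (k, n) * cofactor ?A k n)"
    by (rule laplace_expansion_column) auto
  also have "\<dots> = (\<Sum>k<Suc n. (-1) ^ (k + n) * f k n *
      Determinant.det (Matrix.mat n n (\<lambda>(i, j). f (skip k i) j)))"
  proof (intro sum.cong refl)
    fix k assume "k \<in> {..<Suc n}"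
    moreover have "mat_delete ?A k n = Matrix.mat n n (\<lambda>(i, j). f (skip k i) j)"
      by (rule eq_matI) (auto simp: mat_delete_def skip_def)
    ultimately show "?A $$ (k, n) * cofactor ?A k n =
        (-1) ^ (k + n) * f k n * Determinant.det (Matrix.mat n n (\<lambda>(i, j). f (skip k i) j))"
      by (simp add: cofactor_def)
  qed
  finally show ?thesis .
qed

lemma gen_vandermonde_fun_upd:
  "gen_vandermonde (Suc n) e (x(n := y)) =
     (\<Sum>k<Suc n. (-1) ^ (k + n) * y powr (e k - 1) * gen_vandermonde n (e \<circ> skip k) x)"
proof -
  have "Matrix.mat n n (\<lambda>(i, j). (x(n := y)) j powr (e (skip k i) - 1)) =
        Matrix.mat n n (\<lambda>(i, j). x j powr ((e \<circ> skip k) i - 1))" for k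
    by (rule eq_matI) auto
  then show ?thesis
    unfolding gen_vandermonde_def det_laplace_last_column by simp
qed

definition ordered_simplex :: "nat \<Rightarrow> real \<Rightarrow> (nat \<Rightarrow> real) set" where
  "ordered_simplex n t = {x \<in> PiE {..<n} (\<lambda>_. UNIV).
     (\<forall>i<n. 0 \<le> x i \<and> x i \<le> t) \<and> (\<forall>i j. i \<le> j \<and> j < n \<longrightarrow> x i \<le> x j)}"

lemma J_eq_ordered_simplex: "J n = ordered_simplex n 1"
  by (simp add: J_def ordered_simplex_def)

lemma sets_ordered_simplex [measurable]: "ordered_simplex n t \<in> sets (PiM {..<n} (\<lambda>_. lborel))"
proof -
  let ?M = "PiM {..<n} (\<lambda>_. lborel :: real measure)"
  have component: "(\<lambda>x. x i) \<in> borel_measurable ?M" if "i < n" for i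
    using that by (simp add: measurable_lborel2[symmetric])
  have constraint: "Measurable.pred ?M (\<lambda>x. 0 \<le> x i \<and> x i \<le> t \<and> (i \<le> j \<longrightarrow> x i \<le> x j))"
    if "i < n" "j < n" for i j
    using component[OF that(1)] component[OF that(2)]
    by (intro pred_intros_logic pred_intros_imp') (auto simp: pred_def intro: borel_measurable_le)
  have "Measurable.pred ?M
      (\<lambda>x. \<forall>i\<in>{..<n}. \<forall>j\<in>{..<n}. 0 \<le> x i \<and> x i \<le> t \<and> (i \<le> j \<longrightarrow> x i \<le> x j))"
    by (intro pred_intros_finite(3)) (simp_all add: constraint)
  moreover have "ordered_simplex n t = {x \<in> space ?M.
      \<forall>i\<in>{..<n}. \<forall>j\<in>{..<n}. 0 \<le> x i \<and> x i \<le> t \<and> (i \<le> j \<longrightarrow> x i \<le> x j)}"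
    by (auto simp: ordered_simplex_def space_PiM)
  ultimately show ?thesis
    by (simp only: predE)
qed

lemma fun_upd_mem_ordered_simplex_Suc_iff:
  assumes "x \<in> space (PiM {..<n} (\<lambda>_. lborel))"
  shows "x(n := y) \<in> ordered_simplex (Suc n) t \<longleftrightarrow> y \<in> {0..t} \<and> x \<in> ordered_simplex n y"
proof -
  have "x \<in> PiE {..<n} (\<lambda>_. UNIV)" "x(n := y) \<in> PiE {..<Suc n} (\<lambda>_. UNIV)"
    using assms by (auto simp: space_PiM PiE_def extensional_def)
  moreover have "(\<forall>i<Suc n. 0 \<le> (x(n := y)) i \<and> (x(n := y)) i \<le> t) \<and>
        (\<forall>i j. i \<le> j \<and> j < Suc n \<longrightarrow> (x(n := y)) i \<le> (x(n := y)) j) \<longleftrightarrow>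
      y \<in> {0..t} \<and> (\<forall>i<n. 0 \<le> x i \<and> x i \<le> y) \<and> (\<forall>i j. i \<le> j \<and> j < n \<longrightarrow> x i \<le> x j)"
  proof
    assume "(\<forall>i<Suc n. 0 \<le> (x(n := y)) i \<and> (x(n := y)) i \<le> t) \<and>
        (\<forall>i j. i \<le> j \<and> j < Suc n \<longrightarrow> (x(n := y)) i \<le> (x(n := y)) j)"
    then have bounds: "\<And>i. i < Suc n \<Longrightarrow> 0 \<le> (x(n := y)) i \<and> (x(n := y)) i \<le> t"
      and mono: "\<And>i j. i \<le> j \<Longrightarrow> j < Suc n \<Longrightarrow> (x(n := y)) i \<le> (x(n := y)) j"
      by blast+
    have "y \<in> {0..t}"
      using bounds[of n] by simp
    moreover have "0 \<le> x i \<and> x i \<le> y" if "i < n" for i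
      using that bounds[of i] mono[of i n] by simp
    moreover have "x i \<le> x j" if "i \<le> j" "j < n" for i j
      using that mono[of i j] by simp
    ultimately show "y \<in> {0..t} \<and> (\<forall>i<n. 0 \<le> x i \<and> x i \<le> y) \<and> (\<forall>i j. i \<le> j \<and> j < n \<longrightarrow> x i \<le> x j)"
      by blast
  next
    assume "y \<in> {0..t} \<and> (\<forall>i<n. 0 \<le> x i \<and> x i \<le> y) \<and> (\<forall>i j. i \<le> j \<and> j < n \<longrightarrow> x i \<le> x j)"
    then have "y \<in> {0..t}" and bounds: "\<And>i. i < n \<Longrightarrow> 0 \<le> x i \<and> x i \<le> y"
      and mono: "\<And>i j. i \<le> j \<Longrightarrow> j < n \<Longrightarrow> x i \<le> x j"
      by blast+
    have "0 \<le> (x(n := y)) i \<and> (x(n := y)) i \<le> t" if "i < Suc n" for i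
      using that \<open>y \<in> {0..t}\<close> bounds[of i] by (cases "i = n") auto
    moreover have "(x(n := y)) i \<le> (x(n := y)) j" if "i \<le> j" "j < Suc n" for i j
      using that bounds[of i] mono[of i j] by (cases "j = n"; cases "i = n") auto
    ultimately show "(\<forall>i<Suc n. 0 \<le> (x(n := y)) i \<and> (x(n := y)) i \<le> t) \<and>
        (\<forall>i j. i \<le> j \<and> j < Suc n \<longrightarrow> (x(n := y)) i \<le> (x(n := y)) j)"
      by blast
  qed
  ultimately show ?thesis
    by (simp add: ordered_simplex_def)
qed

lemma (in product_sigma_finite) product_integral_insert_rev:
  fixes f :: "_ \<Rightarrow> 'b::{banach, second_countable_topology}"
  assumes I: "finite I" "i \<notin> I" and f: "integrable (PiM (insert i I) M) f"
  shows "integral\<^sup>L (PiM (insert i I) M) f = (\<integral>y. (\<integral>x. f (x(i := y)) \<partial>PiM I M) \<partial>M i)"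
proof -
  interpret I: finite_product_sigma_finite M I
    by standard fact
  interpret pair_sigma_finite "PiM I M" "M i"
    by (simp add: pair_sigma_finite_def I.sigma_finite_measure_axioms sigma_finite_measures)
  have [measurable]: "f \<in> borel_measurable (PiM (insert i I) M)"
    using f by auto
  have "(\<lambda>z. ennreal (norm (f ((fst z)(i := snd z))))) \<in> borel_measurable (PiM I M \<Otimes>\<^sub>M M i)"
    by measurable
  from sigma_finite_measure.nn_integral_fst[OF sigma_finite_measures this]
  have "(\<integral>\<^sup>+ z. ennreal (norm (f ((fst z)(i := snd z)))) \<partial>(PiM I M \<Otimes>\<^sub>M M i)) =
        (\<integral>\<^sup>+ x. \<integral>\<^sup>+ y. ennreal (norm (f (x(i := y)))) \<partial>M i \<partial>PiM I M)"
    by simp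
  also have "\<dots> = (\<integral>\<^sup>+ x. ennreal (norm (f x)) \<partial>PiM (insert i I) M)"
    using I by (subst product_nn_integral_insert) auto
  also have "\<dots> < \<infinity>"
    using f by (simp add: integrable_iff_bounded)
  finally have "integrable (PiM I M \<Otimes>\<^sub>M M i) (\<lambda>(x, y). f (x(i := y)))"
    by (subst integrable_iff_bounded) (auto simp: case_prod_beta)
  then have "(\<integral>y. (\<integral>x. f (x(i := y)) \<partial>PiM I M) \<partial>M i) = (\<integral>x. (\<integral>y. f (x(i := y)) \<partial>M i) \<partial>PiM I M)"
    by (rule Fubini_integral)
  then show ?thesis
    using product_integral_insert[OF I f] by simp
qed

lemma has_bochner_integral_indicator_powr:
  fixes c t :: real
  assumes "c > 0" "t \<ge> 0"
  shows "has_bochner_integral lborel (\<lambda>y. indicator {0..t} y * y powr (c - 1)) (t powr c / c)"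
proof (rule has_bochner_integral_nn_integral)
  have "((\<lambda>y. y powr (c - 1)) has_integral (t powr c / c)) {0..t}"
    using has_integral_powr_from_0[of "c - 1" t] assms by simp
  then show "(\<integral>\<^sup>+y. ennreal (indicator {0..t} y * y powr (c - 1)) \<partial>lborel) = ennreal (t powr c / c)"
    by (subst nn_integral_has_integral_lebesgue) auto
qed (use assms in \<open>auto simp: indicator_def\<close>)

lemma integrable_monomial_ordered_simplex:
  assumes "t \<ge> 0" "\<And>j. j < n \<Longrightarrow> a j > 0"
  shows "integrable (PiM {..<n} (\<lambda>_. lborel))
           (\<lambda>x. indicator (ordered_simplex n t) x * (\<Prod>j<n. x j powr (a j - 1)))"
proof -
  interpret product_sigma_finite "\<lambda>_. lborel :: real measure"
    by standard
  have "integrable (PiM {..<n} (\<lambda>_. lborel))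
      (\<lambda>x. \<Prod>j<n. indicator {0..t} (x j) * x j powr (a j - 1))"
    using has_bochner_integral_indicator_powr[OF assms(2) assms(1)]
    by (intro product_integrable_prod) (auto simp: has_bochner_integral_iff)
  then have "integrable (PiM {..<n} (\<lambda>_. lborel))
      (\<lambda>x. indicator (ordered_simplex n t) x *\<^sub>R
        (\<Prod>j<n. indicator {0..t} (x j) * x j powr (a j - 1)))"
    by (rule integrable_mult_indicator[OF sets_ordered_simplex])
  moreover have "(\<lambda>x. indicator (ordered_simplex n t) x *\<^sub>R
        (\<Prod>j<n. indicator {0..t} (x j) * x j powr (a j - 1))) =
      (\<lambda>x. indicator (ordered_simplex n t) x * (\<Prod>j<n. x j powr (a j - 1)))"
    by (auto simp: fun_eq_iff indicator_def ordered_simplex_def intro!: prod.cong)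
  ultimately show ?thesis
    by simp
qed

lemma integrable_gen_vandermonde_ordered_simplex:
  assumes "t \<ge> 0" "\<And>i. i < n \<Longrightarrow> e i > 0"
  shows "integrable (PiM {..<n} (\<lambda>_. lborel))
           (\<lambda>x. indicator (ordered_simplex n t) x * gen_vandermonde n e x)"
proof -
  have "integrable (PiM {..<n} (\<lambda>_. lborel))
      (\<lambda>x. \<Sum>p | p permutes {..<n}. signof p *
             (indicator (ordered_simplex n t) x * (\<Prod>j<n. x j powr ((e \<circ> p) j - 1))))"
    using assms
    by (intro Bochner_Integration.integrable_sum integrable_mult_right
        integrable_monomial_ordered_simplex)
       (auto dest: permutes_in_image[where x = j and S = "{..<n}" for j])
  then show ?thesis
    by (simp add: gen_vandermonde_eq_sum_permutations sum_distrib_left mult.left_commute)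
qed

definition det_integral :: "nat \<Rightarrow> (nat \<Rightarrow> real) \<Rightarrow> real \<Rightarrow> real" where
  "det_integral n e t =
     (\<integral>x. indicator (ordered_simplex n t) x * gen_vandermonde n e x \<partial>PiM {..<n} (\<lambda>_. lborel))"

lemma det_integral_Suc:
  assumes "t \<ge> 0" and pos: "\<And>i. i < Suc n \<Longrightarrow> e i > 0"
  shows "det_integral (Suc n) e t =
    (\<integral>y. indicator {0..t} y *
        (\<Sum>k<Suc n. (-1) ^ (k + n) * y powr (e k - 1) * det_integral n (e \<circ> skip k) y) \<partial>lborel)"
proof -
  interpret product_sigma_finite "\<lambda>_. lborel :: real measure"
    by standard
  let ?M = "PiM {..<n} (\<lambda>_. lborel :: real measure)"
  define G where "G = (\<lambda>x. indicator (ordered_simplex (Suc n) t) x * gen_vandermonde (Suc n) e x)"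
  have slice: "(\<integral>x. G (x(n := y)) \<partial>?M) = indicator {0..t} y *
      (\<Sum>k<Suc n. (-1) ^ (k + n) * y powr (e k - 1) * det_integral n (e \<circ> skip k) y)" for y
  proof -
    have "(\<integral>x. G (x(n := y)) \<partial>?M) =
        (\<integral>x. indicator {0..t} y * (\<Sum>k<Suc n. (-1) ^ (k + n) * y powr (e k - 1) *
          (indicator (ordered_simplex n y) x * gen_vandermonde n (e \<circ> skip k) x)) \<partial>?M)"
    proof (rule Bochner_Integration.integral_cong [OF refl])
      fix x assume "x \<in> space ?M"
      then have "indicator (ordered_simplex (Suc n) t) (x(n := y)) =
          (indicator {0..t} y * indicator (ordered_simplex n y) x :: real)"
        by (simp add: fun_upd_mem_ordered_simplex_Suc_iff indicator_def)
      then show "G (x(n := y)) = indicator {0..t} y * (\<Sum>k<Suc n. (-1) ^ (k + n) * y powr (e k - 1) *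
          (indicator (ordered_simplex n y) x * gen_vandermonde n (e \<circ> skip k) x))"
        unfolding G_def gen_vandermonde_fun_upd sum_distrib_left by (simp only: mult_ac)
    qed
    also have "\<dots> = indicator {0..t} y *
        (\<Sum>k<Suc n. (-1) ^ (k + n) * y powr (e k - 1) * det_integral n (e \<circ> skip k) y)"
    proof (cases "y \<in> {0..t}")
      case True
      have "integrable ?M
          (\<lambda>x. indicator (ordered_simplex n y) x * gen_vandermonde n (e \<circ> skip k) x)" for k
        using True pos skip_less_Suc by (intro integrable_gen_vandermonde_ordered_simplex) auto
      then show ?thesis
        by (simp add: det_integral_def Bochner_Integration.integral_sum)
    qed simp
    finally show ?thesis .
  qed
  have "det_integral (Suc n) e t = integral\<^sup>L (PiM (insert n {..<n}) (\<lambda>_. lborel)) G"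
    by (simp add: det_integral_def G_def lessThan_Suc)
  also have "\<dots> = (\<integral>y. (\<integral>x. G (x(n := y)) \<partial>?M) \<partial>lborel)"
    using integrable_gen_vandermonde_ordered_simplex[of t "Suc n" e] assms
    by (intro product_integral_insert_rev) (auto simp: G_def lessThan_Suc)
  finally show ?thesis
    by (simp add: slice)
qed

(* t > 0 is needed for n = 0: the integral is then 1, but 0 powr 0 = 0. *)
lemma det_integral_eq_value:
  fixes e :: "nat \<Rightarrow> real"
  assumes "t > 0" "\<And>i. i < n \<Longrightarrow> e i > 0" "inj_on e {..<n}"
  shows "det_integral n e t = t powr (\<Sum>i<n. e i) * det_integral_value n e"
  using assms
proof (induction n arbitrary: e t)
  case 0
  have "ordered_simplex 0 t = {\<lambda>_. undefined}"
    by (auto simp: ordered_simplex_def)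
  then show ?case
    using \<open>t > 0\<close>
    by (simp add: det_integral_def gen_vandermonde_def det_integral_value_def PiM_empty
        lebesgue_integral_count_space_finite)
next
  case (Suc n e t)
  define S where "S = (\<Sum>i<Suc n. e i)"
  have "S > 0"
    unfolding S_def using Suc.prems(2) by (intro sum_pos) auto
  have integrand: "indicator {0..t} y *
      (\<Sum>k<Suc n. (-1) ^ (k + n) * y powr (e k - 1) * det_integral n (e \<circ> skip k) y) =
      indicator {0..t} y * y powr (S - 1) * (S * det_integral_value (Suc n) e)" for y
  proof (cases "0 < y \<and> y \<le> t")
    case True
    have "(-1) ^ (k + n) * y powr (e k - 1) * det_integral n (e \<circ> skip k) y =
        y powr (S - 1) * ((-1) ^ (k + n) * det_integral_value n (e \<circ> skip k))" if "k < Suc n" for k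
    proof -
      have "det_integral n (e \<circ> skip k) y =
          y powr (\<Sum>i<n. (e \<circ> skip k) i) * det_integral_value n (e \<circ> skip k)"
        using True Suc.prems(2) that inj_on_comp_skip[OF Suc.prems(3) that]
        by (intro Suc.IH) (auto simp: skip_less_Suc comp_def)
      moreover have "(\<Sum>i<n. (e \<circ> skip k) i) = S - e k"
        using that by (simp add: S_def sum_skip)
      ultimately show ?thesis
        using True by (simp add: powr_add[symmetric])
    qed
    then have "(\<Sum>k<Suc n. (-1) ^ (k + n) * y powr (e k - 1) * det_integral n (e \<circ> skip k) y) =
        y powr (S - 1) * (\<Sum>k<Suc n. (-1) ^ (k + n) * det_integral_value n (e \<circ> skip k))"
      unfolding sum_distrib_left by (intro sum.cong) simp_all
    then show ?thesis
      using det_integral_value_Suc[OF Suc.prems(2,3)] by (simp add: S_def)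
  next
    case False
    (* at y = 0 both sides vanish because of the factors 0 powr _ = 0 *)
    then consider "y = 0" | "y \<notin> {0..t}"
      by fastforce
    then show ?thesis
      by cases simp_all
  qed
  have "det_integral (Suc n) e t =
      (\<integral>y. indicator {0..t} y * y powr (S - 1) * (S * det_integral_value (Suc n) e) \<partial>lborel)"
    using det_integral_Suc[OF less_imp_le[OF Suc.prems(1)] Suc.prems(2)] by (simp only: integrand)
  also have "\<dots> =
      (\<integral>y. indicator {0..t} y * y powr (S - 1) \<partial>lborel) * (S * det_integral_value (Suc n) e)"
    by (rule integral_mult_left_zero)
  also have "\<dots> = t powr S * det_integral_value (Suc n) e"
    using has_bochner_integral_indicator_powr[of S t] \<open>S > 0\<close> Suc.prems(1)
    by (simp add: has_bochner_integral_iff)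
  finally show ?case
    by (simp add: S_def)
qed

lemma gen_vandermonde_eq_0_if_not_inj:
  assumes "\<not> inj_on e {..<n}"
  shows "gen_vandermonde n e x = 0"
proof -
  obtain a b where "a < n" "b < n" "a \<noteq> b" "e a = e b"
    using assms by (auto simp: inj_on_def)
  then show ?thesis
    unfolding gen_vandermonde_def by (intro det_identical_rows[of _ n a b]) (auto intro!: eq_vecI)
qed

lemma det_integral_value_eq_0_if_not_inj:
  assumes "\<not> inj_on e {..<n}"
  shows "det_integral_value n e = 0"
proof -
  obtain a b where "a < b" "b < n" "e a = e b"
    using assms by (auto simp: inj_on_def) (metis linorder_neqE_nat)
  moreover have "finite {(i, j). i < j \<and> j < n}"
    by (rule finite_subset[of _ "{..<n} \<times> {..<n}"]) auto
  ultimately have "(\<Prod>(i, j)\<in>{(i, j). i < j \<and> j < n}. (e j - e i) / (e j + e i)) = 0"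
    by (intro prod_zero bexI[of _ "(a, b)"]) auto
  then show ?thesis
    by (simp add: det_integral_value_def)
qed

theorem proposition2p2p2:
  fixes n :: nat and e :: "nat \<Rightarrow> real"
  assumes "\<And>i. i < n \<Longrightarrow> e i > 0"
  shows "(LINT x : J n | (\<Pi>\<^sub>M i\<in>{..<n}. lborel).
            Determinant.det (Matrix.mat n n (\<lambda>(i, j). x j powr (e i - 1))))
         = (1 / (\<Prod>i<n. e i)) *
           (\<Prod>(i, j) \<in> {(i, j). i < j \<and> j < n}. (e j - e i) / (e j + e i))"
proof -
  have "(LINT x : J n | (\<Pi>\<^sub>M i\<in>{..<n}. lborel).
          Determinant.det (Matrix.mat n n (\<lambda>(i, j). x j powr (e i - 1)))) = det_integral n e 1"
    by (simp add: set_lebesgue_integral_def J_eq_ordered_simplex det_integral_def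
        gen_vandermonde_def)
  also have "\<dots> = det_integral_value n e"
  proof (cases "inj_on e {..<n}")
    case True
    then show ?thesis
      using assms by (simp add: det_integral_eq_value)
  next
    case False
    then show ?thesis
      by (simp add: det_integral_def gen_vandermonde_eq_0_if_not_inj
          det_integral_value_eq_0_if_not_inj)
  qed
  finally show ?thesis
    by (simp add: det_integral_value_def)
qed

end
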